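(* Let $G$ be a finite simple graph on the vertex set $[n]$ and let $A$ be a minimal cut set of $G$. Then $A \in \mathcal{C}(G)$. Moreover, if $G$ is a generalized block graph, then for every $T \in \mathcal{C}(G)$, either $A \subseteq T$ or $A \cap T = \emptyset$.
   Context: For $T \subseteq [n]$ let $\overline{T} = [n]\setminus T$, let $G[\overline{T}]$ be the induced subgraph on $\overline{T}$, let $c_G(T)$ be the number of connected components of $G[\overline{T}]$, and let $c_G$ be the number of connected components of $G$. A subset $T \subset [n]$ is a cut set of $G$ if $c_G(T) > c_G$; a minimal cut set is a cut set minimal under inclusion. A vertex $v$ is a cut vertex of a graph $H$ if removing $v$ increases the number of connected components. $T$ has the cut point property if for each $i \in T$, $i$ is a cut vertex of $G[\overline{T}\cup\{i\}]$; $\mathcal{C}(G) = \{\emptyset\} \cup \{T : T \text{ has the cut point property}\}$. The clique complex $\Delta(G)$ is the simplicial complex whose facets are the maximal cliques of $G$. A chordal graph $G$ is a generalized block graph if whenever $F_i, F_j, F_k$ are facets of $\Delta(G)$ with $F_i \cap F_j \cap F_k \neq \emptyset$, then $F_i \cap F_j = F_i \cap F_k = F_j \cap F_k$. *)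

theory Defs
  imports Main
begin

definition simple_graph :: "nat \<Rightarrow> (nat \<Rightarrow> nat \<Rightarrow> bool) \<Rightarrow> bool" where
  "simple_graph n E \<longleftrightarrow>
     (\<forall>u v. E u v \<longrightarrow> E v u) \<and> (\<forall>v. \<not> E v v) \<and>
     (\<forall>u v. E u v \<longrightarrow> u \<in> {1..n} \<and> v \<in> {1..n})"

definition reach_in :: "(nat \<Rightarrow> nat \<Rightarrow> bool) \<Rightarrow> nat set \<Rightarrow> nat \<Rightarrow> nat \<Rightarrow> bool" where
  "reach_in E S u v \<longleftrightarrow> u \<in> S \<and> (\<lambda>x y. E x y \<and> x \<in> S \<and> y \<in> S)\<^sup>*\<^sup>* u v"

definition components :: "(nat \<Rightarrow> nat \<Rightarrow> bool) \<Rightarrow> nat set \<Rightarrow> nat set set" where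
  "components E S = (\<lambda>u. {v. reach_in E S u v}) ` S"

definition ncomp :: "(nat \<Rightarrow> nat \<Rightarrow> bool) \<Rightarrow> nat set \<Rightarrow> nat" where
  "ncomp E S = card (components E S)"

definition cG :: "nat \<Rightarrow> (nat \<Rightarrow> nat \<Rightarrow> bool) \<Rightarrow> nat set \<Rightarrow> nat" where
  "cG n E T = ncomp E ({1..n} - T)"

definition cut_set :: "nat \<Rightarrow> (nat \<Rightarrow> nat \<Rightarrow> bool) \<Rightarrow> nat set \<Rightarrow> bool" where
  "cut_set n E T \<longleftrightarrow> T \<subseteq> {1..n} \<and> cG n E T > ncomp E {1..n}"

definition minimal_cut_set :: "nat \<Rightarrow> (nat \<Rightarrow> nat \<Rightarrow> bool) \<Rightarrow> nat set \<Rightarrow> bool" where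
  "minimal_cut_set n E T \<longleftrightarrow> cut_set n E T \<and> (\<forall>T'. T' \<subset> T \<longrightarrow> \<not> cut_set n E T')"

definition cut_vertex :: "(nat \<Rightarrow> nat \<Rightarrow> bool) \<Rightarrow> nat set \<Rightarrow> nat \<Rightarrow> bool" where
  "cut_vertex E S v \<longleftrightarrow> v \<in> S \<and> ncomp E (S - {v}) > ncomp E S"

definition cut_point_property :: "nat \<Rightarrow> (nat \<Rightarrow> nat \<Rightarrow> bool) \<Rightarrow> nat set \<Rightarrow> bool" where
  "cut_point_property n E T \<longleftrightarrow>
     T \<subseteq> {1..n} \<and> (\<forall>i\<in>T. cut_vertex E (({1..n} - T) \<union> {i}) i)"

definition CG :: "nat \<Rightarrow> (nat \<Rightarrow> nat \<Rightarrow> bool) \<Rightarrow> nat set set" where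
  "CG n E = {{}} \<union> {T. cut_point_property n E T}"

definition clique :: "nat \<Rightarrow> (nat \<Rightarrow> nat \<Rightarrow> bool) \<Rightarrow> nat set \<Rightarrow> bool" where
  "clique n E S \<longleftrightarrow> S \<subseteq> {1..n} \<and> (\<forall>x\<in>S. \<forall>y\<in>S. x \<noteq> y \<longrightarrow> E x y)"

text \<open>Facets of the clique complex = maximal cliques.\<close>
definition facet :: "nat \<Rightarrow> (nat \<Rightarrow> nat \<Rightarrow> bool) \<Rightarrow> nat set \<Rightarrow> bool" where
  "facet n E F \<longleftrightarrow> clique n E F \<and> (\<forall>S. clique n E S \<longrightarrow> F \<subseteq> S \<longrightarrow> S = F)"

definition chordal :: "nat \<Rightarrow> (nat \<Rightarrow> nat \<Rightarrow> bool) \<Rightarrow> bool" where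
  "chordal n E \<longleftrightarrow>
     (\<forall>vs. distinct vs \<and> length vs \<ge> 4 \<and> set vs \<subseteq> {1..n} \<and>
        (\<forall>i < length vs. E (vs ! i) (vs ! ((i + 1) mod length vs))) \<longrightarrow>
        (\<exists>i < length vs. \<exists>j < length vs. i \<noteq> j \<and>
            j \<noteq> (i + 1) mod length vs \<and> i \<noteq> (j + 1) mod length vs \<and>
            E (vs ! i) (vs ! j)))"

text \<open>Generalized block graph (facets F_i, F_j, F_k taken pairwise distinct).\<close>
definition generalized_block_graph :: "nat \<Rightarrow> (nat \<Rightarrow> nat \<Rightarrow> bool) \<Rightarrow> bool" where
  "generalized_block_graph n E \<longleftrightarrow> chordal n E \<and>
     (\<forall>Fi Fj Fk. facet n E Fi \<and> facet n E Fj \<and> facet n E Fk \<and>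
        Fi \<noteq> Fj \<and> Fi \<noteq> Fk \<and> Fj \<noteq> Fk \<and> Fi \<inter> Fj \<inter> Fk \<noteq> {} \<longrightarrow>
        Fi \<inter> Fj = Fi \<inter> Fk \<and> Fi \<inter> Fk = Fj \<inter> Fk)"

end

(*
  The first claim is immediate from minimality: putting any single vertex i of A back
  gives a set with no more components than G, while removing i again yields G - A.

  For the second, suppose i is in A and T while j is in A but not in T.  Minimality of A
  yields two components of G - A each of which is adjacent to every vertex of A.  Joining
  induced paths through them, chordality forces the edge ij and a common neighbour of i
  and j in each component; the two neighbours are non-adjacent, so ij lies in two distinct
  maximal cliques.  In a generalized block graph every maximal clique through i then
  contains j, hence every neighbour of i outside T is j or a neighbour of j.  So i is not a
  cut vertex of G[([n] - T) + i], contradicting the cut point property of T.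
*)
theory Submission
  imports Defs
begin

definition component :: "(nat \<Rightarrow> nat \<Rightarrow> bool) \<Rightarrow> nat set \<Rightarrow> nat \<Rightarrow> nat set" where
  "component E S u = {v. reach_in E S u v}"

lemma components_eq: "components E S = component E S ` S"
  by (simp add: components_def component_def)

lemma reach_in_refl: "u \<in> S \<Longrightarrow> reach_in E S u u"
  by (simp add: reach_in_def)

lemma reach_in_mem:
  assumes "reach_in E S u v"
  shows "v \<in> S"
proof -
  have "(\<lambda>x y. E x y \<and> x \<in> S \<and> y \<in> S)\<^sup>*\<^sup>* u v" "u \<in> S"
    using assms by (simp_all add: reach_in_def)
  then show ?thesis by (cases rule: rtranclp.cases) auto
qed

lemma reach_in_trans: "reach_in E S u v \<Longrightarrow> reach_in E S v w \<Longrightarrow> reach_in E S u w"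
  unfolding reach_in_def by (meson rtranclp_trans)

lemma reach_in_step:
  assumes "reach_in E S u v" "E v w" "w \<in> S"
  shows "reach_in E S u w"
  using assms reach_in_mem[OF assms(1)]
    rtranclp.rtrancl_into_rtrancl[of "\<lambda>x y. E x y \<and> x \<in> S \<and> y \<in> S" u v w]
  by (simp add: reach_in_def)

lemma reach_in_sym:
  assumes "symp E" and "reach_in E S u v"
  shows "reach_in E S v u"
proof -
  have "symp (\<lambda>x y. E x y \<and> x \<in> S \<and> y \<in> S)"
    using assms(1) by (auto simp: symp_def)
  then have "symp (\<lambda>x y. E x y \<and> x \<in> S \<and> y \<in> S)\<^sup>*\<^sup>*"
    by (rule symp_rtranclp)
  then show ?thesis
    using assms(2) reach_in_mem[OF assms(2)] unfolding reach_in_def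
    by (simp add: sympD)
qed

lemma reach_in_mono:
  assumes "S \<subseteq> T" "reach_in E S u v"
  shows "reach_in E T u v"
  using assms
    mono_rtranclp[of "\<lambda>x y. E x y \<and> x \<in> S \<and> y \<in> S" "\<lambda>x y. E x y \<and> x \<in> T \<and> y \<in> T"]
  unfolding reach_in_def by blast

lemma reach_in_closed:
  assumes "c \<in> C" and closed: "\<And>v w. v \<in> C \<Longrightarrow> w \<in> S \<Longrightarrow> E v w \<Longrightarrow> w \<in> C"
    and "reach_in E S c v"
  shows "reach_in E C c v"
proof -
  have "(\<lambda>x y. E x y \<and> x \<in> S \<and> y \<in> S)\<^sup>*\<^sup>* c v" using assms(3) by (simp add: reach_in_def)
  then show ?thesis
  proof (induction rule: rtranclp_induct)
    case base
    show ?case using \<open>c \<in> C\<close> by (rule reach_in_refl)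
  next
    case (step y z)
    then have "y \<in> C" "E y z" "z \<in> S" by (auto dest: reach_in_mem)
    then show ?case using closed step.IH reach_in_step by blast
  qed
qed

lemma component_subset: "component E S u \<subseteq> S"
  by (auto simp: component_def dest: reach_in_mem)

lemma self_in_component: "u \<in> S \<Longrightarrow> u \<in> component E S u"
  by (simp add: component_def reach_in_refl)

lemma component_closed:
  "v \<in> component E S u \<Longrightarrow> w \<in> S \<Longrightarrow> E v w \<Longrightarrow> w \<in> component E S u"
  by (simp add: component_def reach_in_step)

lemma component_eq:
  assumes "symp E" and "v \<in> component E S u"
  shows "component E S v = component E S u"
proof -
  have "reach_in E S u v" "reach_in E S v u"
    using assms reach_in_sym by (auto simp: component_def)
  then show ?thesis
    unfolding component_def by (blast intro: reach_in_trans)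
qed

lemma components_disjoint:
  assumes "symp E" "C \<in> components E S" "D \<in> components E S" "C \<noteq> D"
  shows "C \<inter> D = {}"
proof -
  obtain c d where "C = component E S c" "D = component E S d"
    using assms(2,3) by (auto simp: components_eq)
  then show ?thesis
    using assms(4) component_eq[OF assms(1)] by (metis disjoint_iff)
qed

lemma components_not_adjacent:
  assumes "symp E" "C \<in> components E S" "D \<in> components E S" "C \<noteq> D"
    and "u \<in> C" "v \<in> D"
  shows "\<not> E u v"
proof
  assume "E u v"
  obtain c where c: "C = component E S c" using assms(2) by (auto simp: components_eq)
  have "v \<in> S" using assms(3,6) component_subset by (auto simp: components_eq)
  then have "v \<in> C" using component_closed[of u E S c v] assms(5) \<open>E u v\<close> c by blast
  then show False using components_disjoint[OF assms(1-4)] assms(6) by blast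
qed

lemma finite_components: "finite S \<Longrightarrow> finite (components E S)"
  by (simp add: components_eq)

lemma component_Un_disconnected:
  assumes "u \<in> X" and no_edge: "\<And>x y. x \<in> X \<Longrightarrow> y \<in> Y \<Longrightarrow> \<not> E x y"
  shows "component E (X \<union> Y) u = component E X u"
proof
  have "reach_in E X u v" if "reach_in E (X \<union> Y) u v" for v
    using reach_in_closed[OF \<open>u \<in> X\<close> _ that] no_edge by blast
  then show "component E (X \<union> Y) u \<subseteq> component E X u"
    by (auto simp: component_def)
  show "component E X u \<subseteq> component E (X \<union> Y) u"
    by (auto simp: component_def intro: reach_in_mono[of X])
qed

lemma ncomp_Un_disconnected:
  assumes "symp E" "finite X" "finite Y" "X \<inter> Y = {}"
    and no_edge: "\<And>x y. x \<in> X \<Longrightarrow> y \<in> Y \<Longrightarrow> \<not> E x y"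
  shows "ncomp E (X \<union> Y) = ncomp E X + ncomp E Y"
proof -
  have "\<not> E y x" if "y \<in> Y" "x \<in> X" for x y
    using no_edge[OF that(2,1)] \<open>symp E\<close> by (meson sympD)
  then have "component E (Y \<union> X) u = component E Y u" if "u \<in> Y" for u
    using component_Un_disconnected[of u Y X E] that by blast
  moreover have "Y \<union> X = X \<union> Y" by blast
  ultimately have "components E (X \<union> Y) = components E X \<union> components E Y"
    using component_Un_disconnected[of _ X Y E] no_edge
    by (auto simp: components_eq image_Un)
  moreover have "components E X \<inter> components E Y = {}"
    using assms(4) component_subset self_in_component by (fastforce simp: components_eq)
  ultimately show ?thesis
    unfolding ncomp_def using assms(2,3) by (simp add: card_Un_disjoint finite_components)
qed

lemma ncomp_eq_1:
  assumes "symp E" "u \<in> X" and connected: "\<And>v. v \<in> X \<Longrightarrow> reach_in E X u v"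
  shows "ncomp E X = 1"
proof -
  have "component E X u = X"
    using component_subset connected by (auto simp: component_def)
  then have "component E X v = X" if "v \<in> X" for v
    using component_eq[OF \<open>symp E\<close>, of v X u] connected[OF that] that
    by (simp add: component_def)
  then have "components E X = {X}"
    using \<open>u \<in> X\<close> by (auto simp: components_eq)
  then show ?thesis by (simp add: ncomp_def)
qed

lemma reach_in_insert:
  assumes "symp E" "a \<notin> S" "j \<in> S"
    and nbrs: "\<And>w. w \<in> S \<Longrightarrow> E a w \<Longrightarrow> reach_in E S j w"
    and "u \<in> S" "v \<in> S" "reach_in E (insert a S) u v"
  shows "reach_in E S u v"
proof -
  have "(\<lambda>x y. E x y \<and> x \<in> insert a S \<and> y \<in> insert a S)\<^sup>*\<^sup>* u v"
    using assms(7) by (simp add: reach_in_def)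
  then have "(v \<noteq> a \<longrightarrow> reach_in E S u v) \<and> (v = a \<longrightarrow> reach_in E S u j)"
  proof (induction rule: rtranclp_induct)
    case base
    show ?case using \<open>u \<in> S\<close> \<open>a \<notin> S\<close> reach_in_refl by blast
  next
    case (step y z)
    then have "E y z" "z \<in> insert a S" by auto
    have sym_nbrs: "reach_in E S w j" if "w \<in> S" "E a w" for w
      using nbrs[OF that] reach_in_sym[OF \<open>symp E\<close>] by blast
    show ?case
    proof (cases "y = a")
      case True
      then show ?thesis
        using step.IH \<open>E y z\<close> \<open>z \<in> insert a S\<close> nbrs reach_in_trans by blast
    next
      case False
      then have "reach_in E S u y" "y \<in> S" using step.IH reach_in_mem by blast+
      moreover have "E z y" using \<open>E y z\<close> \<open>symp E\<close> by (simp add: sympD)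
      ultimately show ?thesis
        using \<open>E y z\<close> \<open>z \<in> insert a S\<close> sym_nbrs reach_in_step reach_in_trans by blast
    qed
  qed
  then show ?thesis using \<open>v \<in> S\<close> \<open>a \<notin> S\<close> by auto
qed

lemma ncomp_le_insert:
  assumes "symp E" "finite S" "a \<notin> S" "j \<in> S"
    and nbrs: "\<And>w. w \<in> S \<Longrightarrow> E a w \<Longrightarrow> reach_in E S j w"
  shows "ncomp E S \<le> ncomp E (insert a S)"
proof -
  have "component E S u = component E (insert a S) u \<inter> S" if "u \<in> S" for u
    using reach_in_insert[OF assms(1,3,4) nbrs that] reach_in_mono[of S "insert a S" E u]
      reach_in_mem[of E S u]
    by (auto simp: component_def)
  then have "components E S \<subseteq> (\<lambda>C. C \<inter> S) ` components E (insert a S)"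
    by (auto simp: components_eq)
  then have "card (components E S) \<le> card (components E (insert a S))"
    using assms(2) by (meson card_image_le card_mono finite_components finite_imageI
        finite_insert order_trans)
  then show ?thesis by (simp add: ncomp_def)
qed

lemma two_le_ncomp_insert:
  assumes "symp E" "finite X" "a \<notin> X" "c \<in> X"
    and no_nbr: "\<And>v. v \<in> component E X c \<Longrightarrow> \<not> E a v"
  shows "2 \<le> ncomp E (insert a X)"
proof -
  let ?C = "component E X c"
  have "reach_in E X c v" if "reach_in E (insert a X) c v" for v
  proof (rule reach_in_mono[OF component_subset], rule reach_in_closed[OF _ _ that])
    show "c \<in> ?C" using \<open>c \<in> X\<close> by (rule self_in_component)
    show "w \<in> ?C" if "v \<in> ?C" "w \<in> insert a X" "E v w" for v w
      using that no_nbr[of v] \<open>symp E\<close> reach_in_step[of E X c v w]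
      by (auto simp: component_def dest: sympD)
  qed
  then have "component E (insert a X) c = ?C"
    using reach_in_mono[of X "insert a X" E c] by (auto simp: component_def)
  then have "{?C, component E (insert a X) a} \<subseteq> components E (insert a X)"
    using \<open>c \<in> X\<close> by (auto simp: components_eq)
  moreover have "?C \<noteq> component E (insert a X) a"
    using self_in_component[of a "insert a X" E] component_subset \<open>a \<notin> X\<close> by blast
  ultimately show ?thesis
    unfolding ncomp_def
    by (metis assms(2) card_2_iff card_mono finite_components finite_insert)
qed

lemma reach_in_walk:
  assumes "reach_in E S u v"
  obtains ws where "ws \<noteq> []" "hd ws = u" "last ws = v" "successively E ws"
    "set ws \<subseteq> component E S u"
proof -
  have "(\<lambda>x y. E x y \<and> x \<in> S \<and> y \<in> S)\<^sup>*\<^sup>* u v" "u \<in> S"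
    using assms by (simp_all add: reach_in_def)
  then have "\<exists>ws. ws \<noteq> [] \<and> hd ws = u \<and> last ws = v \<and> successively E ws \<and>
      set ws \<subseteq> component E S u"
  proof (induction rule: rtranclp_induct)
    case base
    then show ?case by (intro exI[of _ "[u]"]) (simp add: self_in_component)
  next
    case (step y z)
    then obtain ws where ws: "ws \<noteq> []" "hd ws = u" "last ws = y" "successively E ws"
      "set ws \<subseteq> component E S u" by blast
    then have "z \<in> component E S u"
      using step.hyps(2) reach_in_step last_in_set by (fastforce simp: component_def)
    then show ?case
      using ws step.hyps(2) by (intro exI[of _ "ws @ [z]"]) (auto simp: successively_append_iff)
  qed
  then show ?thesis using that by blast
qed

fun induced_path :: "('a \<Rightarrow> 'a \<Rightarrow> bool) \<Rightarrow> 'a list \<Rightarrow> bool" where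
  "induced_path R [] = True"
| "induced_path R (x # ys) \<longleftrightarrow>
     x \<notin> set ys \<and> (ys \<noteq> [] \<longrightarrow> R x (hd ys)) \<and> (\<forall>z \<in> set (tl ys). \<not> R x z) \<and>
     induced_path R ys"

lemma induced_path_append:
  "induced_path R (xs @ ys) \<longleftrightarrow> induced_path R xs \<and> induced_path R ys \<and> set xs \<inter> set ys = {} \<and>
     (xs \<noteq> [] \<longrightarrow> ys \<noteq> [] \<longrightarrow> R (last xs) (hd ys)) \<and>
     (\<forall>a\<in>set xs. \<forall>b\<in>set ys. R a b \<longrightarrow> a = last xs \<and> b = hd ys)"
proof (induction xs)
  case Nil
  then show ?case by simp
next
  case (Cons x xs)
  show ?case
  proof (cases xs)
    case Nil
    show ?thesis
    proof (cases ys)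
      case Nil
      then show ?thesis using \<open>xs = []\<close> by simp
    next
      case (Cons y ys')
      then show ?thesis using \<open>xs = []\<close> by auto
    qed
  next
    case (Cons y zs)
    have e1: "induced_path R ((x # xs) @ ys) \<longleftrightarrow> x \<notin> set xs \<and> x \<notin> set ys \<and> R x y \<and>
        (\<forall>z \<in> set zs. \<not> R x z) \<and> (\<forall>z \<in> set ys. \<not> R x z) \<and> induced_path R (xs @ ys)"
      using Cons by auto
    have e2: "induced_path R (x # xs) \<longleftrightarrow>
        x \<notin> set xs \<and> R x y \<and> (\<forall>z \<in> set zs. \<not> R x z) \<and> induced_path R xs"
      using Cons by auto
    have e3: "last (x # xs) = last xs" "set (x # xs) = insert x (set xs)" using Cons by auto
    have e4: "x \<noteq> last xs" if "x \<notin> set xs" using that Cons by auto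
    have e5: "last xs \<in> set zs" if "last xs \<noteq> y" using that Cons by (cases zs) auto
    show ?thesis unfolding e1 e2 e3 Cons.IH
      apply (intro iffI)
      subgoal using Cons by auto
      subgoal using e4 e5 Cons by (simp add: disjoint_iff)
      done
  qed
qed

lemma induced_path_cong:
  "induced_path R xs \<Longrightarrow> (\<forall>a \<in> set xs. \<forall>b \<in> set xs. R a b \<longleftrightarrow> Q a b) \<Longrightarrow> induced_path Q xs"
proof (induction xs)
  case Nil
  then show ?case by simp
next
  case (Cons x xs)
  then show ?case by (cases xs) auto
qed

lemma induced_path_distinct: "induced_path R xs \<Longrightarrow> distinct xs"
  by (induction xs) auto

lemma induced_path_nth_Suc:
  "induced_path R xs \<Longrightarrow> Suc a < length xs \<Longrightarrow> R (xs ! a) (xs ! Suc a)"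
proof (induction xs arbitrary: a)
  case Nil
  then show ?case by simp
next
  case (Cons x xs)
  then show ?case by (cases a) (auto simp: hd_conv_nth)
qed

lemma induced_path_chord:
  "induced_path R xs \<Longrightarrow> a < b \<Longrightarrow> b < length xs \<Longrightarrow> R (xs ! a) (xs ! b) \<Longrightarrow> b = Suc a"
proof (induction xs arbitrary: a b)
  case Nil
  then show ?case by simp
next
  case (Cons x xs)
  obtain b' where b': "b = Suc b'" using Cons.prems(2) by (cases b) auto
  show ?case
  proof (cases a)
    case 0
    show ?thesis
    proof (cases b')
      case 0
      then show ?thesis using b' \<open>a = 0\<close> by simp
    next
      case (Suc c)
      have c: "c < length (tl xs)" using Cons.prems(3) b' Suc by simp
      have "xs ! b' = tl xs ! c" using c Suc by (simp add: nth_tl)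
      then have "xs ! b' \<in> set (tl xs)" using c by simp
      moreover have "R x (xs ! b')" using Cons.prems(4) b' \<open>a = 0\<close> by simp
      ultimately show ?thesis using Cons.prems(1) by auto
    qed
  next
    case (Suc a')
    have "induced_path R xs" using Cons.prems(1) by simp
    moreover have "a' < b'" "b' < length xs" "R (xs ! a') (xs ! b')" using Cons.prems b' Suc by auto
    ultimately have "b' = Suc a'" using Cons.IH by blast
    then show ?thesis using b' Suc by simp
  qed
qed

lemma walk_shortcut:
  "successively R ws \<Longrightarrow> \<not> induced_path R ws \<Longrightarrow>
    \<exists>ws'. ws' \<noteq> [] \<and> length ws' < length ws \<and> hd ws' = hd ws \<and> last ws' = last ws \<and>
      set ws' \<subseteq> set ws \<and> successively R ws'"
proof (induction ws)
  case Nil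
  then show ?case by simp
next
  case (Cons x ys)
  then obtain y ys' where ys: "ys = y # ys'" by (cases ys) auto
  have "successively R ys" "R x y" using Cons.prems(1) ys by (auto simp: successively_Cons)
  consider "\<not> induced_path R ys" | "x \<in> set ys" | "\<exists>z \<in> set ys'. R x z"
    using Cons.prems(2) ys \<open>R x y\<close> by auto
  then show ?case
  proof cases
    case 1
    then obtain ws' where w: "ws' \<noteq> []" "length ws' < length ys" "hd ws' = hd ys"
      "last ws' = last ys" "set ws' \<subseteq> set ys" "successively R ws'"
      using Cons.IH \<open>successively R ys\<close> by blast
    then show ?thesis
      using ys \<open>R x y\<close> by (intro exI[of _ "x # ws'"]) (auto simp: successively_Cons)
  next
    case 2
    then obtain p q where "ys = p @ x # q" by (meson split_list)
    then show ?thesis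
      using \<open>successively R ys\<close> by (intro exI[of _ "x # q"]) (auto simp: successively_append_iff)
  next
    case 3
    then obtain z p q where "R x z" "ys' = p @ z # q" by (meson split_list)
    then show ?thesis
      using \<open>successively R ys\<close> ys
      by (intro exI[of _ "x # z # q"]) (auto simp: successively_append_iff successively_Cons)
  qed
qed

lemma walk_contains_induced_path:
  assumes "successively R ws" "ws \<noteq> []"
  obtains ws' where "ws' \<noteq> []" "hd ws' = hd ws" "last ws' = last ws" "set ws' \<subseteq> set ws"
    "induced_path R ws'"
  using assms
proof (induction "length ws" arbitrary: ws rule: less_induct)
  case less
  show ?case
  proof (cases "induced_path R ws")
    case True
    then show ?thesis using less.prems by blast
  next
    case False
    then obtain ws' where "ws' \<noteq> []" "length ws' < length ws" "hd ws' = hd ws"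
      "last ws' = last ws" "set ws' \<subseteq> set ws" "successively R ws'"
      using walk_shortcut less.prems(2) by blast
    then show ?thesis using less.hyps[of ws'] less.prems(1) by (metis order_trans)
  qed
qed

lemma induced_path_Cons_adjacent:
  "induced_path R (x # ys) \<Longrightarrow> z \<in> set ys \<Longrightarrow> R x z \<Longrightarrow> z = hd ys"
  using induced_path_append[of R "[x]" ys] by simp

lemma induced_path_snoc_adjacent:
  "induced_path R (xs @ [y]) \<Longrightarrow> z \<in> set xs \<Longrightarrow> R z y \<Longrightarrow> z = last xs"
  using induced_path_append[of R xs "[y]"] by simp

lemma induced_path_snoc_last:
  "induced_path R (xs @ [y]) \<Longrightarrow> xs \<noteq> [] \<Longrightarrow> R (last xs) y"
  using induced_path_append[of R xs "[y]"] by simp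

lemma induced_path_join:
  assumes "induced_path E (xs @ [y])" "induced_path E (y # zs)" "set xs \<inter> set zs = {}"
    and no_edge: "\<And>a b. a \<in> set xs \<Longrightarrow> b \<in> set zs \<Longrightarrow> \<not> E a b"
  shows "induced_path E (xs @ y # zs)"
proof -
  have "induced_path E xs" "y \<notin> set xs" "xs \<noteq> [] \<longrightarrow> E (last xs) y"
    using assms(1) induced_path_append[of E xs "[y]"] by auto
  moreover have "\<forall>a \<in> set xs. \<forall>b \<in> set (y # zs). E a b \<longrightarrow> a = last xs \<and> b = hd (y # zs)"
    using no_edge induced_path_snoc_adjacent[OF assms(1)] by fastforce
  ultimately show ?thesis
    using assms(2,3) unfolding induced_path_append by auto
qed

lemma closed_induced_path_cycle:
  assumes "symp E" "induced_path E ys" "ys \<noteq> []" "E x (hd ys)" "E x (last ys)"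
    and "i < length (x # ys)"
  shows "E ((x # ys) ! i) ((x # ys) ! ((i + 1) mod length (x # ys)))"
proof (cases "Suc i < length (x # ys)")
  case True
  then show ?thesis
    using assms(2-4) induced_path_nth_Suc[OF assms(2), of "i - 1"]
    by (cases i) (auto simp: hd_conv_nth)
next
  case False
  then have "i = length ys" using assms(6) by simp
  then show ?thesis
    using assms(1,3,5) by (simp add: last_conv_nth sympD)
qed

lemma closed_induced_path_chords:
  assumes "induced_path E ys" "ys \<noteq> []" "x \<notin> set ys"
    and only_ends: "\<And>z. z \<in> set ys \<Longrightarrow> E x z \<Longrightarrow> z = hd ys \<or> z = last ys"
    and "i < j" "j < length (x # ys)" "E ((x # ys) ! i) ((x # ys) ! j)"
  shows "j = Suc i \<or> (i = 0 \<and> j = length ys)"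
proof -
  obtain k where k: "j = Suc k" "k < length ys" using assms(5,6) by (cases j) auto
  show ?thesis
  proof (cases i)
    case 0
    then have "ys ! k = hd ys \<or> ys ! k = last ys"
      using only_ends k assms(7) by simp
    then have "k = 0 \<or> k = length ys - 1"
      using induced_path_distinct[OF assms(1)] k(2) assms(2)
      by (auto simp: hd_conv_nth last_conv_nth nth_eq_iff_index_eq)
    then show ?thesis using 0 k assms(2) by auto
  next
    case (Suc i')
    then show ?thesis
      using induced_path_chord[OF assms(1), of i' k] assms(5,7) k by simp
  qed
qed

lemma chordal_no_chordless_cycle:
  assumes "chordal n E" "symp E" "induced_path E ys" "3 \<le> length ys" "x \<notin> set ys"
    "set (x # ys) \<subseteq> {1..n}" "E x (hd ys)" "E x (last ys)"
    and only_ends: "\<And>z. z \<in> set ys \<Longrightarrow> E x z \<Longrightarrow> z = hd ys \<or> z = last ys"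
  shows False
proof -
  let ?vs = "x # ys"
  have "ys \<noteq> []" using assms(4) by auto
  have chord: "j = Suc i \<or> (i = 0 \<and> j = length ys)"
    if "i < j" "j < length ?vs" "E (?vs ! i) (?vs ! j)" for i j
    using closed_induced_path_chords[OF assms(3) \<open>ys \<noteq> []\<close> assms(5) only_ends that] .
  have "distinct ?vs" using induced_path_distinct[OF assms(3)] assms(5) by simp
  moreover have "\<forall>i < length ?vs. E (?vs ! i) (?vs ! ((i + 1) mod length ?vs))"
    using closed_induced_path_cycle[OF assms(2,3) \<open>ys \<noteq> []\<close> assms(7,8)] by blast
  moreover have "4 \<le> length ?vs" using assms(4) by simp
  ultimately obtain i j where ij: "i < length ?vs" "j < length ?vs" "i \<noteq> j"
    "j \<noteq> (i + 1) mod length ?vs" "i \<noteq> (j + 1) mod length ?vs" "E (?vs ! i) (?vs ! j)"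
    using assms(1,6) unfolding chordal_def by blast
  show False
  proof (cases "i < j")
    case True
    then show False using chord[OF True ij(2,6)] ij(2,4,5) assms(4) by auto
  next
    case False
    then have "j < i" using ij(3) by simp
    moreover have "E (?vs ! j) (?vs ! i)" using ij(6) assms(2) by (simp add: sympD)
    ultimately have "i = Suc j \<or> (j = 0 \<and> i = length ys)" using chord[OF _ ij(1)] by blast
    then show False using ij(1,4,5) assms(4) by auto
  qed
qed

lemma induced_path_through:
  assumes "a \<noteq> b" "a \<notin> C" "b \<notin> C"
    and "P \<noteq> []" "set P \<subseteq> C" "successively E (a # P @ [b])"
  obtains Q where "Q \<noteq> []" "set Q \<subseteq> C"
    "induced_path (\<lambda>x y. E x y \<and> {x, y} \<noteq> {a, b}) (a # Q @ [b])"
proof -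
  let ?R = "\<lambda>x y. E x y \<and> {x, y} \<noteq> {a, b}"
  have R_if_in_C: "?R x y" if "E x y" "x \<in> C \<or> y \<in> C" for x y
    using that assms(2,3) by (auto simp: doubleton_eq_iff)
  have "successively E P" "E a (hd P)" "E (last P) b"
    using assms(4,6) by (auto simp: successively_append_iff successively_Cons)
  moreover have "hd P \<in> C" "last P \<in> C" "set P \<subseteq> C" using assms(4,5) by auto
  ultimately have "successively ?R P" "?R a (hd P)" "?R (last P) b"
    using R_if_in_C successively_mono[of E P ?R] by blast+
  then have "successively ?R (a # P @ [b])"
    using assms(4) by (simp add: successively_append_iff successively_Cons)
  then obtain W where W: "W \<noteq> []" "hd W = a" "last W = b" "set W \<subseteq> set (a # P @ [b])"
    "induced_path ?R W"
    by (rule walk_contains_induced_path) simp_all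
  obtain rest where "W = a # rest" using W(1,2) by (cases W) auto
  moreover have "rest \<noteq> []" using W(3) \<open>a \<noteq> b\<close> calculation by auto
  ultimately have Q: "W = a # butlast rest @ [b]"
    using W(3) append_butlast_last_id[of rest] by simp
  define Q where "Q = butlast rest"
  have "Q \<noteq> []" using W(5) Q by (auto simp: Q_def)
  moreover have "set Q \<subseteq> C"
    using W(4) Q induced_path_distinct[OF W(5)] assms(5) by (auto simp: Q_def)
  ultimately show ?thesis using that W(5) Q by (simp add: Q_def)
qed

lemma chordal_adjacent_if_two_sides:
  assumes "chordal n E" "symp E" "i \<noteq> j" "C1 \<inter> C2 = {}"
    and "i \<notin> C1 \<union> C2" "j \<notin> C1 \<union> C2" "C1 \<union> C2 \<union> {i, j} \<subseteq> {1..n}"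
    and no_edge: "\<And>x y. x \<in> C1 \<Longrightarrow> y \<in> C2 \<Longrightarrow> \<not> E x y"
    and "P1 \<noteq> []" "set P1 \<subseteq> C1" "successively E (i # P1 @ [j])"
    and "P2 \<noteq> []" "set P2 \<subseteq> C2" "successively E (j # P2 @ [i])"
  shows "E i j"
proof (rule ccontr)
  assume "\<not> E i j"
  then have "\<not> E j i" using \<open>symp E\<close> by (meson sympD)
  then have R1: "(\<lambda>x y. E x y \<and> {x, y} \<noteq> {i, j}) = E" and R2: "(\<lambda>x y. E x y \<and> {x, y} \<noteq> {j, i}) = E"
    using \<open>\<not> E i j\<close> by (auto simp: doubleton_eq_iff)
  obtain Q1 where Q1: "Q1 \<noteq> []" "set Q1 \<subseteq> C1" "induced_path E (i # Q1 @ [j])"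
    using induced_path_through[OF assms(3) _ _ assms(9-11)] assms(5,6) unfolding R1 by blast
  obtain Q2 where Q2: "Q2 \<noteq> []" "set Q2 \<subseteq> C2" "induced_path E (j # Q2 @ [i])"
    using induced_path_through[OF assms(3)[symmetric] _ _ assms(12-14)] assms(5,6)
    unfolding R2 by blast
  let ?ys = "Q1 @ j # Q2"
  have "induced_path E ?ys"
  proof (rule induced_path_join)
    show "induced_path E (Q1 @ [j])" "induced_path E (j # Q2)"
      using Q1(3) Q2(3) induced_path_append[of E "i # Q1" "[j]"]
        induced_path_append[of E "j # Q2" "[i]"]
      by simp_all
    show "set Q1 \<inter> set Q2 = {}" using Q1(2) Q2(2) assms(4) by auto
    show "\<not> E a b" if "a \<in> set Q1" "b \<in> set Q2" for a b
      using that Q1(2) Q2(2) no_edge by blast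
  qed
  moreover have "z = hd ?ys \<or> z = last ?ys" if "z \<in> set ?ys" "E i z" for z
    using that \<open>\<not> E i j\<close> Q1 Q2 \<open>symp E\<close> induced_path_Cons_adjacent[OF Q1(3), of z]
      induced_path_snoc_adjacent[of E "j # Q2" i z]
    by (auto dest: sympD)
  moreover have "E i (hd ?ys)" "E i (last ?ys)"
    using Q1 Q2 \<open>symp E\<close> induced_path_snoc_last[of E "j # Q2" i] by (auto dest: sympD)
  moreover have "3 \<le> length ?ys" using Q1(1) Q2(1) by (cases Q1; cases Q2) auto
  moreover have "i \<notin> set ?ys" "set (i # ?ys) \<subseteq> {1..n}"
    using Q1(2) Q2(2) assms(3,5,7) by auto
  ultimately show False
    using chordal_no_chordless_cycle[OF assms(1,2)] by blast
qed

lemma chordal_common_neighbour: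
  assumes "chordal n E" "symp E" "E i j" "i \<noteq> j" "i \<notin> C" "j \<notin> C" "C \<union> {i, j} \<subseteq> {1..n}"
    and "P \<noteq> []" "set P \<subseteq> C" "successively E (i # P @ [j])"
  obtains x where "x \<in> C" "E i x" "E x j"
proof -
  let ?R = "\<lambda>x y. E x y \<and> {x, y} \<noteq> {i, j}"
  obtain Q where Q: "Q \<noteq> []" "set Q \<subseteq> C" "induced_path ?R (i # Q @ [j])"
    using induced_path_through[OF assms(4-6,8-10)] by blast
  have R_eq_E: "?R a b \<longleftrightarrow> E a b" if "a \<noteq> j" "b \<noteq> j" for a b
    using that by (auto simp: doubleton_eq_iff)
  have ip_iQj: "induced_path ?R ((i # Q) @ [j])" using Q(3) by (simp only: append_Cons)
  have last_adj: "?R (last Q) j" using induced_path_snoc_last[OF ip_iQj] Q(1) by simp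
  \<comment> \<open>a longer path would close up through the edge to j to a chordless cycle\<close>
  have "length Q = 1"
  proof (rule ccontr)
    assume "length Q \<noteq> 1"
    moreover have "length Q \<noteq> 0" using Q(1) by simp
    ultimately have "3 \<le> length (i # Q)" by (simp only: length_Cons)
    moreover have "induced_path ?R (i # Q)" using ip_iQj unfolding induced_path_append by blast
    then have "induced_path E (i # Q)"
      by (rule induced_path_cong) (use Q(2) assms(4,6) in \<open>auto simp: doubleton_eq_iff\<close>)
    moreover have "z = hd (i # Q) \<or> z = last (i # Q)" if "z \<in> set (i # Q)" "E j z" for z
      using that Q(1,2) assms(2,5,6) R_eq_E induced_path_snoc_adjacent[OF ip_iQj, of z]
      by (auto dest: sympD)
    moreover have "E j (hd (i # Q))" "E j (last (i # Q))"
      using assms(2,3) last_adj Q(1) by (auto dest: sympD)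
    moreover have "j \<notin> set (i # Q)" "set (j # i # Q) \<subseteq> {1..n}"
      using Q(2) assms(4,6,7) by auto
    ultimately show False
      using chordal_no_chordless_cycle[OF assms(1,2)] by blast
  qed
  then obtain x where "Q = [x]" by (cases Q) auto
  then show ?thesis
    using that Q(2,3) last_adj by auto
qed

lemma ncomp_component:
  assumes "symp E" "u \<in> S"
  shows "ncomp E (component E S u) = 1"
proof (rule ncomp_eq_1[OF assms(1)])
  show "u \<in> component E S u" using \<open>u \<in> S\<close> by (rule self_in_component)
  show "reach_in E (component E S u) u v" if "v \<in> component E S u" for v
    using reach_in_closed[OF \<open>u \<in> component E S u\<close> component_closed] that
    by (simp add: component_def)
qed

lemma ncomp_Un_component:
  assumes "symp E" "finite S" "P \<subseteq> component E S u" "Q \<subseteq> S - component E S u"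
  shows "ncomp E (P \<union> Q) = ncomp E P + ncomp E Q"
proof (rule ncomp_Un_disconnected[OF assms(1)])
  show "finite P" "finite Q"
    using assms(2-4) component_subset by (metis finite_Diff finite_subset)+
  show "P \<inter> Q = {}" using assms(3,4) by blast
  show "\<not> E x y" if "x \<in> P" "y \<in> Q" for x y
    using that assms(3,4) component_closed[of x E S u y] by blast
qed

lemma minimal_cut_set_subset: "minimal_cut_set n E A \<Longrightarrow> A \<subseteq> {1..n}"
  by (simp add: minimal_cut_set_def cut_set_def)

lemma minimal_cut_set_ncomp_le:
  assumes "minimal_cut_set n E A" "B \<subset> A"
  shows "ncomp E ({1..n} - B) \<le> ncomp E {1..n}"
proof -
  have "B \<subseteq> {1..n}" "\<not> cut_set n E B"
    using assms unfolding minimal_cut_set_def cut_set_def by blast+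
  then show ?thesis by (simp add: cut_set_def cG_def not_less)
qed

lemma minimal_cut_set_ncomp_less:
  "minimal_cut_set n E A \<Longrightarrow> ncomp E {1..n} < ncomp E ({1..n} - A)"
  by (simp add: minimal_cut_set_def cut_set_def cG_def)

lemma minimal_cut_set_cut_point_property:
  assumes "minimal_cut_set n E A"
  shows "cut_point_property n E A"
  unfolding cut_point_property_def cut_vertex_def
proof (intro conjI ballI)
  show "A \<subseteq> {1..n}" using assms by (rule minimal_cut_set_subset)
  fix i assume "i \<in> A"
  with \<open>A \<subseteq> {1..n}\<close> have "{1..n} - (A - {i}) = ({1..n} - A) \<union> {i}" by blast
  moreover have "({1..n} - A) \<union> {i} - {i} = {1..n} - A" using \<open>i \<in> A\<close> by blast
  moreover have "ncomp E ({1..n} - (A - {i})) \<le> ncomp E {1..n}"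
    using minimal_cut_set_ncomp_le[OF assms] \<open>i \<in> A\<close> by blast
  ultimately show "ncomp E ({1..n} - A \<union> {i} - {i}) > ncomp E ({1..n} - A \<union> {i})"
    using minimal_cut_set_ncomp_less[OF assms] by simp
  show "i \<in> {1..n} - A \<union> {i}" by simp
qed

lemma minimal_cut_set_subset_component:
  assumes "symp E" "minimal_cut_set n E A" "i \<in> A"
  shows "A \<subseteq> component E {1..n} i"
proof (rule ccontr)
  let ?V = "{1..n} :: nat set" and ?K = "component E {1..n} i"
  assume "\<not> A \<subseteq> ?K"
  have "A \<subseteq> ?V" using assms(2) by (rule minimal_cut_set_subset)
  have "?K \<subseteq> ?V" by (rule component_subset)
  have split: "ncomp E (P \<union> Q) = ncomp E P + ncomp E Q" if "P \<subseteq> ?K" "Q \<subseteq> ?V - ?K" for P Q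
    using ncomp_Un_component[OF assms(1) _ that] by simp
  have "ncomp E ?K = 1" using ncomp_component[OF assms(1)] assms(3) \<open>A \<subseteq> ?V\<close> by blast
  have "?V = ?K \<union> (?V - ?K)" "?V - (A \<inter> ?K) = (?K - A) \<union> (?V - ?K)"
    "?V - (A - ?K) = ?K \<union> (?V - ?K - A)" "?V - A = (?K - A) \<union> (?V - ?K - A)"
    using \<open>?K \<subseteq> ?V\<close> by blast+
  \<comment> \<open>ncomp (V - A) = ncomp (K - A) + ncomp (V - K - A), and minimality applied to
     A \<inter> K and to A - K bounds the summands by ncomp K = 1 and ncomp (V - K)\<close>
  moreover have "ncomp E (?V - (A \<inter> ?K)) \<le> ncomp E ?V" "ncomp E (?V - (A - ?K)) \<le> ncomp E ?V"
    using minimal_cut_set_ncomp_le[OF assms(2)] \<open>\<not> A \<subseteq> ?K\<close> assms(3) self_in_component[of i ?V E]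
      \<open>A \<subseteq> ?V\<close> by blast+
  ultimately show False
    using split[of ?K "?V - ?K"] split[of "?K - A" "?V - ?K"] split[of ?K "?V - ?K - A"]
      split[of "?K - A" "?V - ?K - A"] \<open>ncomp E ?K = 1\<close> minimal_cut_set_ncomp_less[OF assms(2)]
    by auto
qed

lemma minimal_cut_set_full_components:
  assumes "symp E" "minimal_cut_set n E A" "i \<in> A"
  defines "X \<equiv> component E {1..n} i - A"
  shows "2 \<le> ncomp E X"
    and "\<And>a c. a \<in> A \<Longrightarrow> c \<in> X \<Longrightarrow> \<exists>v \<in> component E X c. E a v"
proof -
  let ?V = "{1..n} :: nat set" and ?K = "component E {1..n} i"
  have "A \<subseteq> ?K" using minimal_cut_set_subset_component[OF assms(1-3)] .
  have "?K \<subseteq> ?V" by (rule component_subset)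
  have split: "ncomp E (P \<union> Q) = ncomp E P + ncomp E Q" if "P \<subseteq> ?K" "Q \<subseteq> ?V - ?K" for P Q
    using ncomp_Un_component[OF assms(1) _ that] by simp
  have "X \<subseteq> ?K" "finite X"
    using \<open>?K \<subseteq> ?V\<close> finite_subset[of X ?V] unfolding X_def by auto
  have "i \<in> ?V" using assms(3) \<open>A \<subseteq> ?K\<close> \<open>?K \<subseteq> ?V\<close> by blast
  have "ncomp E ?V = ncomp E ?K + ncomp E (?V - ?K)"
    using split[of ?K "?V - ?K"] \<open>?K \<subseteq> ?V\<close> by (simp add: Un_absorb1)
  then have "ncomp E ?V = 1 + ncomp E (?V - ?K)"
    using ncomp_component[OF assms(1) \<open>i \<in> ?V\<close>] by simp
  moreover have "?V - A = X \<union> (?V - ?K)"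
    using \<open>A \<subseteq> ?K\<close> \<open>?K \<subseteq> ?V\<close> unfolding X_def by blast
  then have "ncomp E (?V - A) = ncomp E X + ncomp E (?V - ?K)"
    using split[OF \<open>X \<subseteq> ?K\<close>, of "?V - ?K"] by simp
  ultimately show "2 \<le> ncomp E X"
    using minimal_cut_set_ncomp_less[OF assms(2)] by simp
  fix a c assume "a \<in> A" "c \<in> X"
  show "\<exists>v \<in> component E X c. E a v"
  proof (rule ccontr)
    assume "\<not> (\<exists>v \<in> component E X c. E a v)"
    then have "2 \<le> ncomp E (insert a X)"
      using two_le_ncomp_insert[OF assms(1) \<open>finite X\<close> _ \<open>c \<in> X\<close>] \<open>a \<in> A\<close>
      unfolding X_def by blast
    moreover have "?V - (A - {a}) = insert a X \<union> (?V - ?K)"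
      using \<open>a \<in> A\<close> \<open>A \<subseteq> ?K\<close> \<open>?K \<subseteq> ?V\<close> unfolding X_def by blast
    moreover have "insert a X \<subseteq> ?K" using \<open>a \<in> A\<close> \<open>A \<subseteq> ?K\<close> \<open>X \<subseteq> ?K\<close> by blast
    moreover have "ncomp E (?V - (A - {a})) \<le> ncomp E ?V"
      using minimal_cut_set_ncomp_le[OF assms(2)] \<open>a \<in> A\<close> by blast
    ultimately show False
      using split[of "insert a X" "?V - ?K"] \<open>ncomp E ?V = 1 + ncomp E (?V - ?K)\<close> by simp
  qed
qed

lemma walk_through_component:
  assumes "symp E" "u \<in> component E X c" "v \<in> component E X c" "E p u" "E q v"
  obtains P where "P \<noteq> []" "set P \<subseteq> component E X c" "successively E (p # P @ [q])"
proof -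
  have "reach_in E X c u" "reach_in E X c v" using assms(2,3) by (simp_all add: component_def)
  then have "reach_in E X u v" using reach_in_trans[OF reach_in_sym[OF assms(1)]] by blast
  then obtain ws where ws: "ws \<noteq> []" "hd ws = u" "last ws = v" "successively E ws"
    "set ws \<subseteq> component E X u"
    by (rule reach_in_walk)
  moreover have "component E X u = component E X c" using component_eq[OF assms(1,2)] .
  moreover have "E v q" using assms(1,5) by (meson sympD)
  ultimately show ?thesis
    using that[of ws] assms(4) by (auto simp: successively_append_iff successively_Cons)
qed

lemma minimal_cut_set_two_sides:
  assumes "symp E" "minimal_cut_set n E A"
  obtains C1 C2 where "C1 \<inter> C2 = {}" "C1 \<union> C2 \<subseteq> {1..n} - A"
    "\<And>x y. x \<in> C1 \<Longrightarrow> y \<in> C2 \<Longrightarrow> \<not> E x y"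
    "\<And>p q. p \<in> A \<Longrightarrow> q \<in> A \<Longrightarrow> \<exists>P. P \<noteq> [] \<and> set P \<subseteq> C1 \<and> successively E (p # P @ [q])"
    "\<And>p q. p \<in> A \<Longrightarrow> q \<in> A \<Longrightarrow> \<exists>P. P \<noteq> [] \<and> set P \<subseteq> C2 \<and> successively E (p # P @ [q])"
proof -
  have "A \<noteq> {}"
    using minimal_cut_set_ncomp_less[OF assms(2)] by auto
  then obtain i where "i \<in> A" by blast
  define X where "X = component E {1..n} i - A"
  have "finite X" using component_subset[of E "{1..n}" i] finite_subset by (auto simp: X_def)
  have "\<not> card (components E X) \<le> Suc 0"
    using minimal_cut_set_full_components(1)[OF assms \<open>i \<in> A\<close>] by (simp add: X_def ncomp_def)
  then obtain C1 C2 where C: "C1 \<in> components E X" "C2 \<in> components E X" "C1 \<noteq> C2"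
    using card_le_Suc0_iff_eq[OF finite_components[OF \<open>finite X\<close>]] by blast
  have walk: "\<exists>P. P \<noteq> [] \<and> set P \<subseteq> C \<and> successively E (p # P @ [q])"
    if C: "C \<in> components E X" and pq: "p \<in> A" "q \<in> A" for C p q
  proof -
    obtain c where "c \<in> X" "C = component E X c" using C unfolding components_eq by blast
    then have "\<exists>u\<in>C. E p u" "\<exists>v\<in>C. E q v"
      using minimal_cut_set_full_components(2)[OF assms \<open>i \<in> A\<close>] pq unfolding X_def by blast+
    then obtain u v where "u \<in> C" "v \<in> C" "E p u" "E q v" by blast
    then obtain P where "P \<noteq> []" "set P \<subseteq> C" "successively E (p # P @ [q])"
      using walk_through_component[OF assms(1)] \<open>C = component E X c\<close> by blast
    then show ?thesis by blast
  qed
  have "C1 \<union> C2 \<subseteq> {1..n} - A"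
    using C component_subset[of E "{1..n}" i] component_subset[of E X]
    by (auto simp: components_eq X_def)
  then show ?thesis
    using that components_disjoint[OF assms(1) C] components_not_adjacent[OF assms(1) C]
      walk[OF C(1)] walk[OF C(2)] by blast
qed

lemma simple_graph_symp: "simple_graph n E \<Longrightarrow> symp E"
  by (simp add: simple_graph_def symp_def)

lemma chordal_minimal_cut_set_common_neighbours:
  assumes "simple_graph n E" "chordal n E" "minimal_cut_set n E A" "i \<in> A" "j \<in> A" "i \<noteq> j"
  obtains x1 x2 where "E i j" "E i x1" "E x1 j" "E i x2" "E x2 j" "x1 \<noteq> x2" "\<not> E x1 x2"
proof -
  have "symp E" using assms(1) by (rule simple_graph_symp)
  obtain C1 C2 where C: "C1 \<inter> C2 = {}" "C1 \<union> C2 \<subseteq> {1..n} - A"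
    and no_edge: "\<And>x y. x \<in> C1 \<Longrightarrow> y \<in> C2 \<Longrightarrow> \<not> E x y"
    and walk1: "\<And>p q. p \<in> A \<Longrightarrow> q \<in> A \<Longrightarrow> \<exists>P. P \<noteq> [] \<and> set P \<subseteq> C1 \<and> successively E (p # P @ [q])"
    and walk2: "\<And>p q. p \<in> A \<Longrightarrow> q \<in> A \<Longrightarrow> \<exists>P. P \<noteq> [] \<and> set P \<subseteq> C2 \<and> successively E (p # P @ [q])"
    using minimal_cut_set_two_sides[OF \<open>symp E\<close> assms(3)] by blast
  obtain P1 where P1: "P1 \<noteq> []" "set P1 \<subseteq> C1" "successively E (i # P1 @ [j])"
    using walk1 assms(4,5) by blast
  obtain P2 where P2: "P2 \<noteq> []" "set P2 \<subseteq> C2" "successively E (j # P2 @ [i])"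
    using walk2 assms(4,5) by blast
  obtain P2' where P2': "P2' \<noteq> []" "set P2' \<subseteq> C2" "successively E (i # P2' @ [j])"
    using walk2 assms(4,5) by blast
  have "A \<subseteq> {1..n}" using assms(3) by (rule minimal_cut_set_subset)
  then have outside: "i \<notin> C1 \<union> C2" "j \<notin> C1 \<union> C2" and "C1 \<union> C2 \<union> {i, j} \<subseteq> {1..n}"
    using C(2) assms(4,5) by auto
  then have "E i j"
    using chordal_adjacent_if_two_sides[OF assms(2) \<open>symp E\<close> assms(6) C(1) _ _ _ no_edge P1 P2]
    by blast
  obtain x1 where "x1 \<in> C1" "E i x1" "E x1 j"
    using chordal_common_neighbour[OF assms(2) \<open>symp E\<close> \<open>E i j\<close> assms(6) _ _ _ P1]
      outside \<open>C1 \<union> C2 \<union> {i, j} \<subseteq> {1..n}\<close> by blast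
  moreover obtain x2 where "x2 \<in> C2" "E i x2" "E x2 j"
    using chordal_common_neighbour[OF assms(2) \<open>symp E\<close> \<open>E i j\<close> assms(6) _ _ _ P2']
      outside \<open>C1 \<union> C2 \<union> {i, j} \<subseteq> {1..n}\<close> by blast
  ultimately show ?thesis
    using that \<open>E i j\<close> C(1) no_edge by blast
qed

lemma clique_subset_facet:
  assumes "clique n E S"
  obtains F where "facet n E F" "S \<subseteq> F"
proof -
  let ?M = "{F. clique n E F \<and> S \<subseteq> F}"
  have "finite ?M"
    by (rule finite_subset[of _ "Pow {1..n}"]) (auto simp: clique_def)
  moreover have "?M \<noteq> {}" using assms by blast
  ultimately have "\<exists>F \<in> ?M. \<forall>F' \<in> ?M. F \<subseteq> F' \<longrightarrow> F = F'"
    by (rule finite_has_maximal)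
  then obtain F where F: "clique n E F" "S \<subseteq> F" and max: "\<forall>F' \<in> ?M. F \<subseteq> F' \<longrightarrow> F = F'"
    by blast
  have "S' = F" if "clique n E S'" "F \<subseteq> S'" for S'
    using max that F(2) by auto
  then show ?thesis
    using that F by (auto simp: facet_def)
qed

lemma generalized_block_graph_facets_Int:
  assumes "generalized_block_graph n E" "facet n E F1" "facet n E F2" "facet n E F3"
    and "F1 \<noteq> F2" "F1 \<noteq> F3" "F2 \<noteq> F3" "F1 \<inter> F2 \<inter> F3 \<noteq> {}"
  shows "F1 \<inter> F2 = F1 \<inter> F3"
proof -
  have "\<forall>Fi Fj Fk. facet n E Fi \<and> facet n E Fj \<and> facet n E Fk \<and>
      Fi \<noteq> Fj \<and> Fi \<noteq> Fk \<and> Fj \<noteq> Fk \<and> Fi \<inter> Fj \<inter> Fk \<noteq> {} \<longrightarrow>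
      Fi \<inter> Fj = Fi \<inter> Fk \<and> Fi \<inter> Fk = Fj \<inter> Fk"
    using assms(1) unfolding generalized_block_graph_def by (rule conjunct2)
  then show ?thesis using assms(2-8) by blast
qed

lemma generalized_block_graph_adjacent_if_two_triangles:
  assumes "simple_graph n E" "generalized_block_graph n E"
    and "E i j" "E i x1" "E j x1" "E i x2" "E j x2" "x1 \<noteq> x2" "\<not> E x1 x2"
    and "E i w" "w \<noteq> j"
  shows "E j w"
proof -
  have "clique n E {i, j, x1}" "clique n E {i, j, x2}" "clique n E {i, w}"
    using assms(1,3-7,10) unfolding simple_graph_def clique_def by blast+
  then obtain F1 F2 F3 where F1: "facet n E F1" "{i, j, x1} \<subseteq> F1"
    and F2: "facet n E F2" "{i, j, x2} \<subseteq> F2" and F3: "facet n E F3" "{i, w} \<subseteq> F3"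
    by (meson clique_subset_facet)
  have "F1 \<noteq> F2"
    using F1 F2 assms(8,9) by (auto simp: facet_def clique_def)
  \<comment> \<open>two distinct maximal cliques share the edge ij, so every third one through i contains j\<close>
  have "j \<in> F3"
  proof (cases "F3 = F1 \<or> F3 = F2")
    case True
    then show ?thesis using F1 F2 by blast
  next
    case False
    moreover have "i \<in> F1 \<inter> F2 \<inter> F3" using F1 F2 F3 by blast
    ultimately have "F1 \<inter> F2 = F1 \<inter> F3"
      using generalized_block_graph_facets_Int[OF assms(2) F1(1) F2(1) F3(1) \<open>F1 \<noteq> F2\<close>] by blast
    then show ?thesis using F1 F2 by blast
  qed
  then show ?thesis using F3 assms(11) by (auto simp: facet_def clique_def)
qed

lemma not_cut_vertex_if_neighbours_adjacent:
  assumes "symp E" "finite S" "i \<notin> S" "j \<in> S"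
    and nbrs: "\<And>w. w \<in> S \<Longrightarrow> E i w \<Longrightarrow> w = j \<or> E j w"
  shows "\<not> cut_vertex E (insert i S) i"
proof -
  have "ncomp E S \<le> ncomp E (insert i S)"
  proof (rule ncomp_le_insert[OF assms(1-4)])
    show "reach_in E S j w" if "w \<in> S" "E i w" for w
      using nbrs[OF that] reach_in_refl[OF \<open>j \<in> S\<close>]
        reach_in_step[OF reach_in_refl[OF \<open>j \<in> S\<close>] _ that(1)] by auto
  qed
  moreover have "insert i S - {i} = S" using \<open>i \<notin> S\<close> by simp
  ultimately show ?thesis by (simp add: cut_vertex_def)
qed

lemma generalized_block_graph_minimal_cut_set_inside_or_disjoint:
  assumes "simple_graph n E" "generalized_block_graph n E" "minimal_cut_set n E A" "T \<in> CG n E"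
  shows "A \<subseteq> T \<or> A \<inter> T = {}"
proof (rule ccontr)
  assume "\<not> (A \<subseteq> T \<or> A \<inter> T = {})"
  then obtain i j where "i \<in> A" "i \<in> T" "j \<in> A" "j \<notin> T" by blast
  let ?S = "{1..n} - T"
  have "cut_point_property n E T" using assms(4) \<open>i \<in> T\<close> by (auto simp: CG_def)
  then have "cut_vertex E (insert i ?S) i"
    using \<open>i \<in> T\<close> by (simp add: cut_point_property_def)
  have "chordal n E" using assms(2) by (simp add: generalized_block_graph_def)
  have "i \<noteq> j" using \<open>i \<in> T\<close> \<open>j \<notin> T\<close> by blast
  obtain x1 x2 where "E i j" "E i x1" "E x1 j" "E i x2" "E x2 j" "x1 \<noteq> x2" "\<not> E x1 x2"
    by (rule chordal_minimal_cut_set_common_neighbours[OF assms(1) \<open>chordal n E\<close> assms(3)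
          \<open>i \<in> A\<close> \<open>j \<in> A\<close> \<open>i \<noteq> j\<close>])
  moreover have "E j x1" "E j x2"
    using \<open>E x1 j\<close> \<open>E x2 j\<close> simple_graph_symp[OF assms(1)] by (meson sympD)+
  ultimately have "w = j \<or> E j w" if "E i w" for w
    using generalized_block_graph_adjacent_if_two_triangles[OF assms(1,2), of i j x1 x2 w] that
    by blast
  moreover have "j \<in> ?S"
    using minimal_cut_set_subset[OF assms(3)] \<open>j \<in> A\<close> \<open>j \<notin> T\<close> by blast
  ultimately have "\<not> cut_vertex E (insert i ?S) i"
    using not_cut_vertex_if_neighbours_adjacent[OF simple_graph_symp[OF assms(1)], of ?S i j]
      \<open>i \<in> T\<close>
    by blast
  then show False using \<open>cut_vertex E (insert i ?S) i\<close> by blast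
qed

theorem lemma3p1:
  fixes n :: nat and E :: "nat \<Rightarrow> nat \<Rightarrow> bool" and A :: "nat set"
  assumes "simple_graph n E"
    and "minimal_cut_set n E A"
  shows "A \<in> CG n E \<and>
         (generalized_block_graph n E \<longrightarrow> (\<forall>T \<in> CG n E. A \<subseteq> T \<or> A \<inter> T = {}))"
  using minimal_cut_set_cut_point_property[OF assms(2)]
    generalized_block_graph_minimal_cut_set_inside_or_disjoint[OF assms(1) _ assms(2)]
  by (simp add: CG_def)

end
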